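(* Let $K$ be a field of characteristic $p>0$ such that $K/k$ is a finitely generated field extension, where $k=\bigcap_{n\ge0}K^{p^n}$. Let $W_\bullet$ be a power tower on $K$, let $\mathcal{F}_i=T_{W_{i-1}/W_i}$ for $i\ge1$, and let $\mathcal{D}=\bigcup_{n\ge0}\operatorname{Diff}_{W_n}(K)$. Then for every $i\ge1$, $d(K/W_{i-1})(\mathcal{D})\cap TW_{i-1}=\mathcal{F}_i$. In particular $\mathcal{D}\cap TK=T_{K/W_1}$.
   Context: A power tower on $K$ is a sequence of subfields $W_0,W_1,\ldots$ with $W_j=W_i\cdot K^{p^j}$ whenever $j\le i$ ($\cdot$ = compositum in $K$; so $W_0=K$). For a field $F$, $TF$ is the space of derivations of $F$, $T_{F/A}$ those vanishing on a subfield $A$. For subfields $A\subseteq B$, $\operatorname{Diff}_A(B)$ is the union over $n$ of the $A$-linear maps $D:B\to B$ with $[b_0,[b_1,[\ldots,[b_n,D]\ldots]]]=0$ for all $b_i\in B$. For $k\subseteq W\subseteq K$, $d(K/W)$ sends $D\in\operatorname{Diff}_k(K)$ to its restriction $D|_W:W\to K$, an element of $\operatorname{Diff}_k(W)\otimes_W K$, identified with the $K$-span of $\iota\circ E$ ($E\in\operatorname{Diff}_k(W)$, $\iota:W\to K$ the inclusion) in $\operatorname{Hom}(W,K)$; $TW$ is viewed inside it via $E\mapsto \iota\circ E$. $d(K/K)$ is the identity. *)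

theory Defs
  imports Main
begin

text \<open>The ambient field K is the whole type 'a (a field). Subfields of K are sets.
  Maps on a subfield B are represented as total functions 'a \<Rightarrow> 'a that vanish outside B.\<close>

definition is_subfield :: "'a::field set \<Rightarrow> bool" where
  "is_subfield F \<longleftrightarrow> 0 \<in> F \<and> 1 \<in> F \<and> (\<forall>x\<in>F. \<forall>y\<in>F. x + y \<in> F \<and> x * y \<in> F)
     \<and> (\<forall>x\<in>F. - x \<in> F) \<and> (\<forall>x\<in>F. x \<noteq> 0 \<longrightarrow> inverse x \<in> F)"

definition field_gen :: "'a::field set \<Rightarrow> 'a set" where
  "field_gen A = \<Inter> {F. is_subfield F \<and> A \<subseteq> F}"

definition compositum :: "'a::field set \<Rightarrow> 'a set \<Rightarrow> 'a set" where
  "compositum A B = field_gen (A \<union> B)"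

definition frob_pow :: "nat \<Rightarrow> nat \<Rightarrow> 'a::field set" where
  "frob_pow p n = range (\<lambda>x::'a. x ^ (p ^ n))"

definition power_tower :: "nat \<Rightarrow> (nat \<Rightarrow> 'a::field set) \<Rightarrow> bool" where
  "power_tower p W \<longleftrightarrow> (\<forall>i. is_subfield (W i)) \<and>
     (\<forall>i j. j \<le> i \<longrightarrow> W j = compositum (W i) (frob_pow p j))"

definition derivations :: "'a::field set \<Rightarrow> ('a \<Rightarrow> 'a) set" where
  "derivations F = {D. (\<forall>x. x \<notin> F \<longrightarrow> D x = 0) \<and> (\<forall>x\<in>F. D x \<in> F) \<and>
      (\<forall>x\<in>F. \<forall>y\<in>F. D (x + y) = D x + D y) \<and>
      (\<forall>x\<in>F. \<forall>y\<in>F. D (x * y) = x * D y + y * D x)}"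

definition rel_derivations :: "'a::field set \<Rightarrow> 'a set \<Rightarrow> ('a \<Rightarrow> 'a) set" where
  "rel_derivations F A = {D \<in> derivations F. \<forall>a\<in>A. D a = 0}"

definition lin_maps :: "'a::field set \<Rightarrow> 'a set \<Rightarrow> ('a \<Rightarrow> 'a) set" where
  "lin_maps A B = {D. (\<forall>x. x \<notin> B \<longrightarrow> D x = 0) \<and> (\<forall>x\<in>B. D x \<in> B) \<and>
      (\<forall>x\<in>B. \<forall>y\<in>B. D (x + y) = D x + D y) \<and>
      (\<forall>a\<in>A. \<forall>x\<in>B. D (a * x) = a * D x)}"

definition commut :: "'a::field set \<Rightarrow> 'a \<Rightarrow> ('a \<Rightarrow> 'a) \<Rightarrow> 'a \<Rightarrow> 'a" where
  "commut B b D = (\<lambda>x. if x \<in> B then b * D x - D (b * x) else 0)"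

definition Diff :: "'a::field set \<Rightarrow> 'a set \<Rightarrow> ('a \<Rightarrow> 'a) set" where
  "Diff A B = (\<Union>n. {D \<in> lin_maps A B.
      \<forall>bs. length bs = Suc n \<longrightarrow> set bs \<subseteq> B \<longrightarrow> foldr (commut B) bs D = (\<lambda>_. 0)})"

definition restr :: "'a set \<Rightarrow> ('a \<Rightarrow> 'a::field) \<Rightarrow> 'a \<Rightarrow> 'a" where
  "restr W D = (\<lambda>x. if x \<in> W then D x else 0)"

end

(*
  If D is a W_n-linear differential operator whose restriction E to W_(i-1) is a derivation,
  then D 1 = 0, so D kills W_n; and E kills p-th powers of W_(i-1), hence K^(p^i).  The kernel
  of E is a subfield, and W_i is generated by W_m (m >= n, i) and K^(p^i), so E vanishes on W_i.

  Conversely, composing E in T_(W_(i-1)/W_i) with a W_(i-1)-linear retraction K -> W_(i-1)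
  extends it to a W_i-linear map on K.  K is generated over W_i by finitely many s with
  s^(p^i) in W_i, and in characteristic p the iterate ad(s)^(p^i) equals ad(s^(p^i)), which
  kills W_i-linear maps.  The ad(s) commute, so by pigeonhole all sufficiently long iterated
  commutators with generators vanish; commutators with arbitrary elements reduce to those with
  generators because the b for which [b, G] has bounded order form a subfield.  Hence every
  W_i-linear map on K is a differential operator.
*)
theory Submission
  imports Defs "HOL-Computational_Algebra.Polynomial" "HOL-Computational_Algebra.Primes"
begin

lemma is_subfieldD:
  assumes "is_subfield F"
  shows "0 \<in> F" "1 \<in> F" "x \<in> F \<Longrightarrow> y \<in> F \<Longrightarrow> x + y \<in> F" "x \<in> F \<Longrightarrow> y \<in> F \<Longrightarrow> x * y \<in> F"
    "x \<in> F \<Longrightarrow> - x \<in> F" "x \<in> F \<Longrightarrow> x \<noteq> 0 \<Longrightarrow> inverse x \<in> F"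
  using assms unfolding is_subfield_def by auto

lemma field_gen_superset: "A \<subseteq> field_gen A"
  unfolding field_gen_def by auto

lemma field_gen_least: "A \<subseteq> F \<Longrightarrow> is_subfield F \<Longrightarrow> field_gen A \<subseteq> F"
  unfolding field_gen_def by auto

lemma field_gen_mono: "A \<subseteq> B \<Longrightarrow> field_gen A \<subseteq> field_gen B"
  unfolding field_gen_def by auto

lemma commut_UNIV: "commut UNIV b G = (\<lambda>x. b * G x - G (b * x))"
  unfolding commut_def by simp

lemma lin_maps_UNIV:
  "lin_maps A UNIV = {D. (\<forall>x y. D (x + y) = D x + D y) \<and> (\<forall>a\<in>A. \<forall>x. D (a * x) = a * D x)}"
  unfolding lin_maps_def by auto

lemma commut_lin_maps: "G \<in> lin_maps A UNIV \<Longrightarrow> commut UNIV b G \<in> lin_maps A UNIV"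
  unfolding lin_maps_UNIV commut_UNIV by (auto simp: algebra_simps)

lemma foldr_commut_lin_maps: "G \<in> lin_maps A UNIV \<Longrightarrow> foldr (commut UNIV) bs G \<in> lin_maps A UNIV"
  by (induction bs) (auto intro: commut_lin_maps)

lemma commut_lin_maps_eq_0: "G \<in> lin_maps A UNIV \<Longrightarrow> a \<in> A \<Longrightarrow> commut UNIV a G = (\<lambda>_. 0)"
  unfolding lin_maps_UNIV commut_UNIV by auto

lemma commut_commute: "commut UNIV b (commut UNIV c G) = commut UNIV c (commut UNIV b G)"
  by (auto simp: commut_UNIV algebra_simps)

lemma foldr_commut_commute:
  "foldr (commut UNIV) bs (commut UNIV b G) = commut UNIV b (foldr (commut UNIV) bs G)"
  by (induction bs) (auto simp: commut_commute)

lemma foldr_commut_add: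
  "foldr (commut UNIV) bs (\<lambda>x. G x + H x)
     = (\<lambda>x. foldr (commut UNIV) bs G x + foldr (commut UNIV) bs H x)"
  by (induction bs) (auto simp: commut_UNIV algebra_simps)

lemma foldr_commut_mult_left:
  "foldr (commut UNIV) bs (\<lambda>x. c * G x) = (\<lambda>x. c * foldr (commut UNIV) bs G x)"
  by (induction bs) (auto simp: commut_UNIV algebra_simps)

lemma foldr_commut_mult_right:
  "foldr (commut UNIV) bs (\<lambda>x. G (c * x)) = (\<lambda>x. foldr (commut UNIV) bs G (c * x))"
  by (induction bs) (auto simp: commut_UNIV algebra_simps)

lemma foldr_commut_mset_eq:
  assumes "mset xs = mset ys"
  shows "foldr (commut UNIV) xs = foldr (commut UNIV) (ys :: 'a::field list)"
proof -
  have comm: "commut UNIV y \<circ> commut UNIV x = commut UNIV x \<circ> commut UNIV (y::'a)" for x y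
    by (rule ext) (simp only: o_apply commut_commute)
  have "foldr (commut UNIV) xs = fold (commut UNIV) xs" by (rule foldr_fold) (rule comm)
  also have "\<dots> = fold (commut UNIV) ys" by (rule fold_multiset_equiv) (auto simp: comm assms)
  also have "\<dots> = foldr (commut UNIV) ys" by (rule foldr_fold[symmetric]) (rule comm)
  finally show ?thesis .
qed

definition diff_ops :: "nat \<Rightarrow> ('a::field \<Rightarrow> 'a) set" where
  "diff_ops m = {G. \<forall>bs. length bs = m \<longrightarrow> foldr (commut UNIV) bs G = (\<lambda>_. 0)}"

lemma Diff_UNIV_eq: "Diff A UNIV = (\<Union>n. lin_maps A UNIV \<inter> diff_ops (Suc n))"
  unfolding Diff_def diff_ops_def by auto

lemma diff_ops_0: "diff_ops 0 = {\<lambda>_. 0}"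
  unfolding diff_ops_def by auto

lemma zero_in_diff_ops: "(\<lambda>_. 0) \<in> diff_ops m"
proof -
  have "foldr (commut UNIV) bs (\<lambda>_. 0) = (\<lambda>_. 0 :: 'a)" for bs :: "'a list"
    by (induction bs) (simp_all add: commut_UNIV)
  then show ?thesis unfolding diff_ops_def by simp
qed

lemma diff_ops_add: "G \<in> diff_ops m \<Longrightarrow> H \<in> diff_ops m \<Longrightarrow> (\<lambda>x. G x + H x) \<in> diff_ops m"
  unfolding diff_ops_def by (simp add: foldr_commut_add)

lemma diff_ops_mult_left: "G \<in> diff_ops m \<Longrightarrow> (\<lambda>x. c * G x) \<in> diff_ops m"
  unfolding diff_ops_def by (simp add: foldr_commut_mult_left)

lemma diff_ops_mult_right: "G \<in> diff_ops m \<Longrightarrow> (\<lambda>x. G (c * x)) \<in> diff_ops m"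
  unfolding diff_ops_def by (simp add: foldr_commut_mult_right)

lemma diff_ops_SucI: "(\<And>b. commut UNIV b G \<in> diff_ops m) \<Longrightarrow> G \<in> diff_ops (Suc m)"
  unfolding diff_ops_def by (auto simp: length_Suc_conv foldr_commut_commute[symmetric])

lemma commut_add_left:
  assumes "\<And>x y. G (x + y) = G x + G y"
  shows "commut UNIV (b + c) G = (\<lambda>x. commut UNIV b G x + commut UNIV c G x)"
  by (simp add: commut_UNIV distrib_right assms fun_eq_iff)

lemma commut_mult_left:
  "commut UNIV (b * c) G = (\<lambda>x. b * commut UNIV c G x + commut UNIV b G (c * x))"
  by (simp add: commut_UNIV right_diff_distrib mult.assoc mult.left_commute)

lemma commut_uminus_left:
  assumes "\<And>x y. G (x + y) = G x + G y"
  shows "commut UNIV (- b) G = (\<lambda>x. - 1 * commut UNIV b G x)"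
proof -
  have "G (- x) = - G x" for x
    using assms[of x "- x"] assms[of 0 0] by (simp add: eq_neg_iff_add_eq_0)
  then show ?thesis by (simp add: commut_UNIV)
qed

lemma commut_inverse_left:
  assumes "b \<noteq> 0"
  shows "commut UNIV (inverse b) G = (\<lambda>x. - inverse b * commut UNIV b G (inverse b * x))"
  using assms by (simp add: commut_UNIV fun_eq_iff right_diff_distrib mult.assoc[symmetric])

lemma subfield_commut_diff_ops:
  assumes add: "\<And>x y. G (x + y) = G x + G y"
  shows "is_subfield {b. commut UNIV b G \<in> diff_ops m}"
  unfolding is_subfield_def
proof (intro conjI ballI impI; simp only: mem_Collect_eq)
  have "G 0 = 0" using add[of 0 0] by (metis add_0 add_cancel_right_right)
  then show "commut UNIV 0 G \<in> diff_ops m" using zero_in_diff_ops by (simp add: commut_UNIV)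
  show "commut UNIV 1 G \<in> diff_ops m" using zero_in_diff_ops by (simp add: commut_UNIV)
next
  fix b c assume b: "commut UNIV b G \<in> diff_ops m" and c: "commut UNIV c G \<in> diff_ops m"
  show "commut UNIV (b + c) G \<in> diff_ops m"
    unfolding commut_add_left[OF add] by (rule diff_ops_add[OF b c])
  show "commut UNIV (b * c) G \<in> diff_ops m"
    unfolding commut_mult_left by (rule diff_ops_add[OF diff_ops_mult_left[OF c] diff_ops_mult_right[OF b]])
next
  fix b assume b: "commut UNIV b G \<in> diff_ops m"
  show "commut UNIV (- b) G \<in> diff_ops m"
    unfolding commut_uminus_left[OF add] by (rule diff_ops_mult_left[OF b])
  assume "b \<noteq> 0"
  show "commut UNIV (inverse b) G \<in> diff_ops m"
    unfolding commut_inverse_left[OF \<open>b \<noteq> 0\<close>] by (rule diff_ops_mult_left[OF diff_ops_mult_right[OF b]])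
qed

lemma commut_diff_ops_of_generators:
  assumes G: "G \<in> lin_maps A UNIV" and gen: "field_gen (A \<union> S) = UNIV"
    and S: "\<And>s. s \<in> S \<Longrightarrow> commut UNIV s G \<in> diff_ops m"
  shows "commut UNIV b G \<in> diff_ops m"
proof -
  let ?T = "{b. commut UNIV b G \<in> diff_ops m}"
  have "A \<subseteq> ?T" using commut_lin_maps_eq_0[OF G] zero_in_diff_ops by auto
  moreover have "S \<subseteq> ?T" using S by auto
  moreover have "is_subfield ?T"
    by (rule subfield_commut_diff_ops) (use G in \<open>simp add: lin_maps_UNIV\<close>)
  ultimately have "field_gen (A \<union> S) \<subseteq> ?T" by (intro field_gen_least) auto
  then show ?thesis using gen by auto
qed

text \<open>With \<open>R\<close> the operator \<open>G \<mapsto> G (b * _)\<close>, this is \<open>P(R)\<close> applied to \<open>G\<close> (for \<open>degree P < N\<close>).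
  Since \<open>commut UNIV b\<close> acts as \<open>b - R\<close>, its iterates are of this form.\<close>
definition poly_right_mult :: "('a::field \<Rightarrow> 'a) \<Rightarrow> 'a \<Rightarrow> nat \<Rightarrow> 'a poly \<Rightarrow> 'a \<Rightarrow> 'a" where
  "poly_right_mult G b N P = (\<lambda>x. \<Sum>k<N. coeff P k * G (b ^ k * x))"

lemma poly_right_mult_Suc:
  "degree P < N \<Longrightarrow> poly_right_mult G b (Suc N) P = poly_right_mult G b N P"
  unfolding poly_right_mult_def by (auto simp: coeff_eq_0)

lemma poly_right_mult_pCons_0:
  "poly_right_mult G b N P (b * x) = poly_right_mult G b (Suc N) (pCons 0 P) x"
  unfolding poly_right_mult_def sum.lessThan_Suc_shift by (simp add: mult_ac)

lemma poly_right_mult_diff: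
  "poly_right_mult G b N (smult c P - Q) x = c * poly_right_mult G b N P x - poly_right_mult G b N Q x"
  unfolding poly_right_mult_def by (simp add: sum_subtractf sum_distrib_left algebra_simps)

lemma commut_funpow_eq_poly_right_mult:
  "(commut UNIV b ^^ n) G = poly_right_mult G b (Suc n) ([:b, -1:] ^ n)"
proof (induction n)
  case 0
  then show ?case by (simp add: poly_right_mult_def)
next
  case (Suc n)
  let ?P = "[:b, -1:] ^ n"
  have "degree ?P \<le> n"
    using degree_power_le[of "[:b, -1:]" n] by simp
  have "(commut UNIV b ^^ Suc n) G = commut UNIV b (poly_right_mult G b (Suc n) ?P)"
    using Suc.IH by simp
  also have "\<dots> = (\<lambda>x. b * poly_right_mult G b (Suc (Suc n)) ?P x
                        - poly_right_mult G b (Suc (Suc n)) (pCons 0 ?P) x)"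
    using \<open>degree ?P \<le> n\<close> by (simp add: commut_UNIV poly_right_mult_pCons_0 poly_right_mult_Suc)
  also have "\<dots> = poly_right_mult G b (Suc (Suc n)) (smult b ?P - pCons 0 ?P)"
    by (rule ext) (simp only: poly_right_mult_diff)
  also have "smult b ?P - pCons 0 ?P = [:b, -1:] ^ Suc n"
    by (simp add: mult_pCons_left)
  finally show ?case .
qed

lemma commut_funpow_CHAR_power:
  assumes prime: "prime CHAR('a::field)" and q: "q = CHAR('a) ^ n"
  shows "(commut UNIV (b::'a) ^^ q) G = commut UNIV (b ^ q) G"
proof -
  have "q > 0" using q prime by (simp add: prime_gt_0_nat)
  have "(1 + - 1 :: 'a) ^ q = 1 ^ q + (- 1) ^ q"
    by (rule freshmans_dream'[OF prime q])
  then have minus_one: "(- 1 :: 'a) ^ q = - 1"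
    using \<open>q > 0\<close> by (simp add: power_0_left eq_neg_iff_add_eq_0 add.commute)
  have "[:b, -1:] ^ q = ([:b:] + monom (- 1) 1) ^ q"
    by (simp add: monom_Suc monom_0)
  also have "\<dots> = [:b:] ^ q + monom (- 1) 1 ^ q"
    by (rule freshmans_dream') (use prime q in simp_all)
  also have "\<dots> = [:b ^ q:] - monom 1 q"
    by (simp add: poly_const_pow monom_power minus_one minus_monom)
  finally have P: "[:b, -1:] ^ q = [:b ^ q:] - monom 1 q" .
  show ?thesis
  proof
    fix x
    have "(commut UNIV b ^^ q) G x = (\<Sum>k<Suc q. coeff ([:b ^ q:] - monom 1 q) k * G (b ^ k * x))"
      by (simp add: commut_funpow_eq_poly_right_mult P poly_right_mult_def)
    also have "\<dots> = b ^ q * G x - G (b ^ q * x)"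
    proof -
      have "(\<Sum>k<Suc q. coeff [:b ^ q:] k * G (b ^ k * x)) = b ^ q * G x"
        by (simp add: lessThan_Suc_eq_insert_0 sum.reindex)
      moreover have "(\<Sum>k<q. coeff (monom 1 q) k * G (b ^ k * x)) = 0"
        by (rule sum.neutral) (auto simp: coeff_monom)
      ultimately show ?thesis
        by (simp add: left_diff_distrib sum_subtractf)
    qed
    finally show "(commut UNIV b ^^ q) G x = commut UNIV (b ^ q) G x"
      by (simp add: commut_UNIV)
  qed
qed

lemma ex_count_list_gt:
  assumes "set xs \<subseteq> S" and "finite S" and "card S * m < length xs"
  shows "\<exists>s\<in>S. m < count_list xs s"
proof (rule ccontr)
  assume "\<not> ?thesis"
  then have "sum (count_list xs) S \<le> sum (\<lambda>_. m) S" by (intro sum_mono) auto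
  then show False using sum_count_set[OF assms(1,2)] assms(3) by simp
qed

lemma foldr_commut_long_eq_0:
  assumes prime: "prime CHAR('a::field)" and fin: "finite S"
    and pow: "\<And>s. s \<in> S \<Longrightarrow> s ^ (CHAR('a) ^ n) \<in> A" and G: "G \<in> lin_maps A UNIV"
    and bs: "set bs \<subseteq> S" "card S * (CHAR('a) ^ n - 1) < length bs"
  shows "foldr (commut UNIV) bs G = (\<lambda>_. 0 :: 'a)"
proof -
  let ?q = "CHAR('a) ^ n"
  obtain s where s: "s \<in> S" "?q \<le> count_list bs s"
    using ex_count_list_gt[OF bs(1) fin bs(2)] by auto
  obtain rs where rs: "mset rs = mset bs - replicate_mset ?q s" using ex_mset by blast
  have "replicate_mset ?q s \<subseteq># mset bs"
    using s(2) by (simp add: subseteq_mset_def count_mset)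
  then have "mset (replicate ?q s @ rs) = mset bs"
    using rs by (simp add: subset_mset.add_diff_inverse)
  then have "foldr (commut UNIV) bs G = (commut UNIV s ^^ ?q) (foldr (commut UNIV) rs G)"
    by (metis foldr_commut_mset_eq foldr_append foldr_replicate)
  also have "\<dots> = commut UNIV (s ^ ?q) (foldr (commut UNIV) rs G)"
    by (rule commut_funpow_CHAR_power[OF prime refl])
  also have "\<dots> = (\<lambda>_. 0)"
    using commut_lin_maps_eq_0[OF foldr_commut_lin_maps[OF G] pow[OF s(1)]] .
  finally show ?thesis .
qed

lemma foldr_commut_diff_ops:
  assumes prime: "prime CHAR('a::field)" and fin: "finite (S :: 'a set)" and gen: "field_gen (A \<union> S) = UNIV"
    and pow: "\<And>s. s \<in> S \<Longrightarrow> s ^ (CHAR('a) ^ n) \<in> A" and G: "G \<in> lin_maps A UNIV"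
    and "set bs \<subseteq> S" "card S * (CHAR('a) ^ n - 1) < length bs + d"
  shows "foldr (commut UNIV) bs G \<in> diff_ops d"
  using assms(6,7)
proof (induction d arbitrary: bs)
  case 0
  then show ?case
    using foldr_commut_long_eq_0[OF prime fin pow G] by (simp add: diff_ops_0)
next
  case (Suc d)
  have "commut UNIV s (foldr (commut UNIV) bs G) \<in> diff_ops d" if "s \<in> S" for s
    using Suc.IH[of "s # bs"] Suc.prems that by simp
  then have "commut UNIV b (foldr (commut UNIV) bs G) \<in> diff_ops d" for b
    by (rule commut_diff_ops_of_generators[OF foldr_commut_lin_maps[OF G] gen])
  then show ?case by (rule diff_ops_SucI)
qed

lemma lin_maps_subset_Diff:
  assumes "prime CHAR('a::field)" and "finite S" and "field_gen (A \<union> S) = UNIV"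
    and "\<And>s. s \<in> S \<Longrightarrow> s ^ (CHAR('a) ^ n) \<in> A"
  shows "lin_maps A UNIV \<subseteq> Diff A (UNIV :: 'a set)"
proof
  fix G :: "'a \<Rightarrow> 'a" assume G: "G \<in> lin_maps A UNIV"
  have "foldr (commut UNIV) [] G \<in> diff_ops (Suc (card S * (CHAR('a) ^ n - 1)))"
    by (rule foldr_commut_diff_ops[OF assms G]) simp_all
  then show "G \<in> Diff A UNIV"
    unfolding Diff_UNIV_eq using G by auto
qed

lemma derivationsD:
  assumes "E \<in> derivations F"
  shows "x \<notin> F \<Longrightarrow> E x = 0" "x \<in> F \<Longrightarrow> y \<in> F \<Longrightarrow> E (x + y) = E x + E y"
    "x \<in> F \<Longrightarrow> y \<in> F \<Longrightarrow> E (x * y) = x * E y + y * E x"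
  using assms unfolding derivations_def by auto

lemma derivation_1:
  assumes "E \<in> derivations F" and "is_subfield F"
  shows "E 1 = 0"
  using derivationsD(3)[OF assms(1) is_subfieldD(2,2)[OF assms(2)]] by (metis add_cancel_right_right mult_1)

lemma derivation_power:
  assumes E: "E \<in> derivations F" and F: "is_subfield F" and y: "y \<in> F"
  shows "y ^ m \<in> F \<and> E (y ^ Suc m) = of_nat (Suc m) * y ^ m * E y"
proof (induction m)
  case 0
  then show ?case using is_subfieldD(2)[OF F] by simp
next
  case (Suc m)
  then have "y ^ Suc m \<in> F" using is_subfieldD(4)[OF F y] by simp
  moreover have "E (y * y ^ Suc m) = y * E (y ^ Suc m) + y ^ Suc m * E y"
    using derivationsD(3)[OF E y \<open>y ^ Suc m \<in> F\<close>] .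
  ultimately show ?case using Suc by (simp add: algebra_simps)
qed

lemma derivation_power_CHAR:
  fixes F :: "'a::field set"
  assumes E: "E \<in> derivations F" and F: "is_subfield F" and y: "y \<in> F"
  shows "E (y ^ CHAR('a)) = 0"
proof (cases "CHAR('a)")
  case 0
  then show ?thesis using derivation_1[OF E F] by simp
next
  case (Suc r)
  then have "of_nat (Suc r) = (0 :: 'a)" using of_nat_CHAR by metis
  then show ?thesis using derivation_power[OF E F y, of r] \<open>CHAR('a) = Suc r\<close> by (metis mult_zero_left)
qed

lemma derivation_kernel_subfield:
  assumes E: "E \<in> derivations F" and F: "is_subfield F"
  shows "is_subfield {x \<in> F. E x = 0}"
proof -
  have "E 0 = 0"
    using derivationsD(2)[OF E is_subfieldD(1,1)[OF F]] by (metis add_0 add_cancel_right_right)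
  show ?thesis
    unfolding is_subfield_def
  proof (intro conjI ballI impI; simp only: mem_Collect_eq)
    show "0 \<in> F \<and> E 0 = 0" using is_subfieldD(1)[OF F] \<open>E 0 = 0\<close> by simp
    show "1 \<in> F \<and> E 1 = 0" using is_subfieldD(2)[OF F] derivation_1[OF E F] by simp
  next
    fix x y assume "x \<in> F \<and> E x = 0" and "y \<in> F \<and> E y = 0"
    then show "x + y \<in> F \<and> E (x + y) = 0" "x * y \<in> F \<and> E (x * y) = 0"
      using derivationsD(2,3)[OF E] is_subfieldD(3,4)[OF F] by auto
  next
    fix x assume x: "x \<in> F \<and> E x = 0"
    then have "E (x + - x) = E x + E (- x)" using derivationsD(2)[OF E] is_subfieldD(5)[OF F] by blast
    then show "- x \<in> F \<and> E (- x) = 0" using x \<open>E 0 = 0\<close> is_subfieldD(5)[OF F] by simp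
    assume "x \<noteq> 0"
    then have "E (x * inverse x) = x * E (inverse x) + inverse x * E x"
      using derivationsD(3)[OF E] is_subfieldD(6)[OF F] x by blast
    then show "inverse x \<in> F \<and> E (inverse x) = 0"
      using x \<open>x \<noteq> 0\<close> derivation_1[OF E F] is_subfieldD(6)[OF F] by simp
  qed
qed

lemma derivation_vanishes_on_field_gen:
  assumes E: "E \<in> derivations F" and F: "is_subfield F"
    and X: "X \<subseteq> F" "\<And>x. x \<in> X \<Longrightarrow> E x = 0" and x: "x \<in> field_gen X"
  shows "E x = 0"
  using field_gen_least[of X "{x \<in> F. E x = 0}"] derivation_kernel_subfield[OF E F] X x by auto

definition complement_spaces :: "'a::field set \<Rightarrow> 'a set set" where
  "complement_spaces F = {M. 0 \<in> M \<and> (\<forall>x\<in>M. \<forall>y\<in>M. x + y \<in> M) \<and> (\<forall>a\<in>F. \<forall>x\<in>M. a * x \<in> M)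
      \<and> M \<inter> F \<subseteq> {0}}"

lemma ex_maximal_complement_space:
  "\<exists>M\<in>complement_spaces F. \<forall>X\<in>complement_spaces F. M \<subseteq> X \<longrightarrow> X = M"
proof (rule subset_Zorn_nonempty)
  show "complement_spaces F \<noteq> {}"
    unfolding complement_spaces_def by (auto intro!: exI[of _ "{0}"])
next
  fix \<C> assume "\<C> \<noteq> {}" and "subset.chain (complement_spaces F) \<C>"
  then have sub: "\<C> \<subseteq> complement_spaces F" and chain: "\<forall>X\<in>\<C>. \<forall>Y\<in>\<C>. X \<subseteq> Y \<or> Y \<subseteq> X"
    unfolding subset.chain_def by auto
  show "\<Union>\<C> \<in> complement_spaces F"
    unfolding complement_spaces_def
  proof (intro CollectI conjI ballI subsetI)
    show "0 \<in> \<Union>\<C>" using \<open>\<C> \<noteq> {}\<close> sub unfolding complement_spaces_def by auto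
  next
    fix x y assume "x \<in> \<Union>\<C>" "y \<in> \<Union>\<C>"
    then obtain Z where "Z \<in> \<C>" "x \<in> Z" "y \<in> Z" using chain by blast
    then show "x + y \<in> \<Union>\<C>" using sub unfolding complement_spaces_def by blast
  next
    fix a x assume "a \<in> F" "x \<in> \<Union>\<C>"
    then show "a * x \<in> \<Union>\<C>" using sub unfolding complement_spaces_def by blast
  next
    fix x assume "x \<in> \<Union>\<C> \<inter> F"
    then show "x \<in> {0}" using sub unfolding complement_spaces_def by blast
  qed
qed

lemma maximal_complement_space_spans:
  assumes F: "is_subfield F" and M: "M \<in> complement_spaces F"
    and max: "\<forall>X\<in>complement_spaces F. M \<subseteq> X \<longrightarrow> X = M"
  shows "\<exists>f\<in>F. x - f \<in> M"
proof (rule ccontr)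
  assume x: "\<not> (\<exists>f\<in>F. x - f \<in> M)"
  have M0: "0 \<in> M" and Madd: "\<And>u v. u \<in> M \<Longrightarrow> v \<in> M \<Longrightarrow> u + v \<in> M"
    and Mmult: "\<And>a u. a \<in> F \<Longrightarrow> u \<in> M \<Longrightarrow> a * u \<in> M" and MF: "M \<inter> F \<subseteq> {0}"
    using M unfolding complement_spaces_def by auto
  define M' where "M' = {c + a * x | c a. c \<in> M \<and> a \<in> F}"
  have "M' \<in> complement_spaces F"
    unfolding complement_spaces_def
  proof (intro CollectI conjI ballI subsetI)
    show "0 \<in> M'" unfolding M'_def using M0 is_subfieldD(1)[OF F] by force
  next
    fix u v assume "u \<in> M'" "v \<in> M'"
    then obtain c a c' a' where "u = c + a * x" "v = c' + a' * x" "c \<in> M" "a \<in> F" "c' \<in> M" "a' \<in> F"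
      unfolding M'_def by auto
    then have "u + v = (c + c') + (a + a') * x" "c + c' \<in> M" "a + a' \<in> F"
      using Madd is_subfieldD(3)[OF F] by (auto simp: algebra_simps)
    then show "u + v \<in> M'" unfolding M'_def by blast
  next
    fix b u assume "b \<in> F" "u \<in> M'"
    then obtain c a where "u = c + a * x" "c \<in> M" "a \<in> F"
      unfolding M'_def by auto
    then have "b * u = b * c + (b * a) * x" "b * c \<in> M" "b * a \<in> F"
      using Mmult is_subfieldD(4)[OF F] \<open>b \<in> F\<close> by (auto simp: algebra_simps)
    then show "b * u \<in> M'" unfolding M'_def by blast
  next
    fix u assume "u \<in> M' \<inter> F"
    then obtain c a where u: "u = c + a * x" "c \<in> M" "a \<in> F" "u \<in> F"
      unfolding M'_def by auto
    show "u \<in> {0}"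
    proof (cases "a = 0")
      case True
      then show ?thesis using u MF by auto
    next
      case False
      have "x - inverse a * u = - inverse a * c"
        using False u(1) by (simp add: field_simps)
      moreover have "inverse a * u \<in> F"
        using is_subfieldD(4,6)[OF F] u(3,4) False by blast
      moreover have "- inverse a \<in> F"
        using is_subfieldD(5,6)[OF F] u(3) False by blast
      then have "- inverse a * c \<in> M"
        using Mmult u(2) by blast
      ultimately show ?thesis using x by metis
    qed
  qed
  moreover have "M \<subseteq> M'"
    unfolding M'_def using is_subfieldD(1)[OF F] by force
  ultimately have "M' = M" using max by blast
  moreover have "x \<in> M'"
    unfolding M'_def using M0 is_subfieldD(2)[OF F] by force
  ultimately have "x - 0 \<in> M" by simp
  then show False using x is_subfieldD(1)[OF F] by blast
qed

lemma ex_linear_retraction: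
  assumes F: "is_subfield F"
  shows "\<exists>\<pi>\<in>lin_maps F UNIV. (\<forall>x. \<pi> x \<in> F) \<and> (\<forall>x\<in>F. \<pi> x = x)"
proof -
  obtain M where M: "M \<in> complement_spaces F"
    and max: "\<forall>X\<in>complement_spaces F. M \<subseteq> X \<longrightarrow> X = M"
    using ex_maximal_complement_space by (rule bexE)
  have M0: "0 \<in> M" and Madd: "\<And>u v. u \<in> M \<Longrightarrow> v \<in> M \<Longrightarrow> u + v \<in> M"
    and Mmult: "\<And>a u. a \<in> F \<Longrightarrow> u \<in> M \<Longrightarrow> a * u \<in> M" and MF: "M \<inter> F \<subseteq> {0}"
    using M unfolding complement_spaces_def by auto
  have "\<forall>x. \<exists>f. f \<in> F \<and> x - f \<in> M"
    using maximal_complement_space_spans[OF F M max] by blast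
  then obtain \<pi> where "\<forall>x. \<pi> x \<in> F \<and> x - \<pi> x \<in> M"
    by (rule choice[THEN exE])
  then have \<pi>F: "\<And>x. \<pi> x \<in> F" and \<pi>M: "\<And>x. x - \<pi> x \<in> M"
    by auto
  have unique: "\<pi> x = f" if "f \<in> F" "x - f \<in> M" for x f
  proof -
    have "(x - f) + (- 1) * (x - \<pi> x) \<in> M"
      using Madd Mmult is_subfieldD(2,5)[OF F] \<pi>M that(2) by blast
    moreover have "(x - f) + (- 1) * (x - \<pi> x) = \<pi> x - f"
      by (simp add: algebra_simps)
    moreover have "\<pi> x - f \<in> F"
      using is_subfieldD(3,5)[OF F] \<pi>F that(1) by (metis diff_conv_add_uminus)
    ultimately have "\<pi> x - f \<in> M \<inter> F" by simp
    then show ?thesis using MF by auto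
  qed
  have add: "\<pi> (x + y) = \<pi> x + \<pi> y" for x y
  proof (rule unique)
    show "\<pi> x + \<pi> y \<in> F" using is_subfieldD(3)[OF F] \<pi>F by blast
    have "(x - \<pi> x) + (y - \<pi> y) \<in> M" using Madd \<pi>M by blast
    then show "x + y - (\<pi> x + \<pi> y) \<in> M" by (simp add: algebra_simps)
  qed
  have mult: "\<pi> (a * x) = a * \<pi> x" if "a \<in> F" for a x
  proof (rule unique)
    show "a * \<pi> x \<in> F" using is_subfieldD(4)[OF F] \<pi>F that by blast
    have "a * (x - \<pi> x) \<in> M" using Mmult \<pi>M that by blast
    then show "a * x - a * \<pi> x \<in> M" by (simp add: algebra_simps)
  qed
  have "\<pi> x = x" if "x \<in> F" for x
    using unique[OF that] M0 by simp
  moreover have "\<pi> \<in> lin_maps F UNIV"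
    unfolding lin_maps_UNIV by (simp add: add mult)
  ultimately show ?thesis using \<pi>F by blast
qed

lemma power_tower_subfield: "power_tower p W \<Longrightarrow> is_subfield (W i)"
  unfolding power_tower_def by blast

lemma power_tower_eq_field_gen:
  "power_tower p W \<Longrightarrow> j \<le> i \<Longrightarrow> W j = field_gen (W i \<union> frob_pow p j)"
  unfolding power_tower_def compositum_def by blast

lemma power_tower_antimono: "power_tower p W \<Longrightarrow> j \<le> i \<Longrightarrow> W i \<subseteq> W j"
  using power_tower_eq_field_gen field_gen_superset by blast

lemma frob_pow_subset_power_tower: "power_tower p W \<Longrightarrow> frob_pow p j \<subseteq> W j"
  using power_tower_eq_field_gen[of p W j j] field_gen_superset by blast

lemma power_tower_0: "power_tower p W \<Longrightarrow> W 0 = UNIV"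
  using frob_pow_subset_power_tower[of p W 0] unfolding frob_pow_def by auto

lemma power_tower_derivation_frob_pow:
  fixes W :: "nat \<Rightarrow> 'a::field set"
  assumes W: "power_tower CHAR('a) W" and E: "E \<in> derivations (W j)"
    and z_frob: "z \<in> frob_pow CHAR('a) (Suc j)"
  shows "z \<in> W j \<and> E z = 0"
proof -
  have Wj: "is_subfield (W j)" by (rule power_tower_subfield[OF W])
  obtain x where "z = x ^ CHAR('a) ^ Suc j"
    using z_frob unfolding frob_pow_def by blast
  then have z: "z = (x ^ CHAR('a) ^ j) ^ CHAR('a)"
    by (simp add: power_mult[symmetric] mult.commute)
  have "x ^ CHAR('a) ^ j \<in> W j"
    using frob_pow_subset_power_tower[OF W, of j] unfolding frob_pow_def by blast
  then have "E z = 0" using derivation_power_CHAR[OF E Wj] z by simp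
  moreover have "z \<in> W j"
    using z_frob frob_pow_subset_power_tower[OF W, of "Suc j"] power_tower_antimono[OF W, of j "Suc j"]
    by auto
  ultimately show ?thesis by simp
qed

lemma restr_Diff_derivations_subset:
  fixes W :: "nat \<Rightarrow> 'a::field set"
  assumes W: "power_tower CHAR('a) W"
  shows "restr (W j) ` (\<Union>n. Diff (W n) UNIV) \<inter> derivations (W j) \<subseteq> rel_derivations (W j) (W (Suc j))"
proof
  fix E assume "E \<in> restr (W j) ` (\<Union>n. Diff (W n) UNIV) \<inter> derivations (W j)"
  then obtain n D where "D \<in> Diff (W n) UNIV" and ED: "E = restr (W j) D"
    and E: "E \<in> derivations (W j)"
    by blast
  then have D: "D \<in> lin_maps (W n) UNIV" unfolding Diff_def by blast
  have Wj: "is_subfield (W j)" by (rule power_tower_subfield[OF W])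
  define m where "m = max n (Suc j)"
  have "W m \<subseteq> W n" "W m \<subseteq> W j"
    using power_tower_antimono[OF W] by (simp_all add: m_def)
  have "D 1 = 0"
    using derivation_1[OF E Wj] is_subfieldD(2)[OF Wj] ED by (simp add: restr_def)
  have Wm: "E w = 0" if "w \<in> W m" for w
  proof -
    have "D (w * 1) = w * D 1"
      using D \<open>W m \<subseteq> W n\<close> that unfolding lin_maps_UNIV by blast
    then have "D w = 0" using \<open>D 1 = 0\<close> by simp
    then show ?thesis using ED \<open>W m \<subseteq> W j\<close> that unfolding restr_def by auto
  qed
  have "E x = 0" if "x \<in> W (Suc j)" for x
  proof (rule derivation_vanishes_on_field_gen[OF E Wj])
    show "W m \<union> frob_pow CHAR('a) (Suc j) \<subseteq> W j" using \<open>W m \<subseteq> W j\<close> power_tower_derivation_frob_pow[OF W E] by blast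
    show "E y = 0" if "y \<in> W m \<union> frob_pow CHAR('a) (Suc j)" for y
      using that Wm power_tower_derivation_frob_pow[OF W E] by blast
    show "x \<in> field_gen (W m \<union> frob_pow CHAR('a) (Suc j))"
      using \<open>x \<in> W (Suc j)\<close> power_tower_eq_field_gen[OF W, of "Suc j" m] by (simp add: m_def)
  qed
  then show "E \<in> rel_derivations (W j) (W (Suc j))"
    using E unfolding rel_derivations_def by blast
qed

lemma rel_derivation_linear_extension:
  assumes F: "is_subfield F" and E: "E \<in> rel_derivations F A" and "A \<subseteq> F"
  shows "\<exists>D\<in>lin_maps A UNIV. restr F D = E"
proof -
  obtain \<pi> where \<pi>: "\<pi> \<in> lin_maps F UNIV" "\<And>x. \<pi> x \<in> F" "\<And>x. x \<in> F \<Longrightarrow> \<pi> x = x"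
    using ex_linear_retraction[OF F] by blast
  have E: "E \<in> derivations F" "\<And>a. a \<in> A \<Longrightarrow> E a = 0"
    using E unfolding rel_derivations_def by auto
  have "(\<lambda>x. E (\<pi> x)) \<in> lin_maps A UNIV"
    unfolding lin_maps_UNIV
  proof (intro CollectI conjI allI ballI)
    fix x y show "E (\<pi> (x + y)) = E (\<pi> x) + E (\<pi> y)"
      using \<pi> derivationsD(2)[OF E(1)] unfolding lin_maps_UNIV by simp
  next
    fix a x assume "a \<in> A"
    then have "E (\<pi> (a * x)) = a * E (\<pi> x) + \<pi> x * E a"
      using \<pi> derivationsD(3)[OF E(1)] \<open>A \<subseteq> F\<close> unfolding lin_maps_UNIV by auto
    then show "E (\<pi> (a * x)) = a * E (\<pi> x)" using E(2)[OF \<open>a \<in> A\<close>] by simp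
  qed
  moreover have "restr F (\<lambda>x. E (\<pi> x)) = E"
    using \<pi>(3) derivationsD(1)[OF E(1)] unfolding restr_def by auto
  ultimately show ?thesis by blast
qed

lemma rel_derivations_subset_restr_Diff:
  fixes W :: "nat \<Rightarrow> 'a::field set"
  assumes prime: "prime CHAR('a)" and W: "power_tower CHAR('a) W"
    and fin: "finite S" and gen: "field_gen (W (Suc j) \<union> S) = UNIV"
  shows "rel_derivations (W j) (W (Suc j)) \<subseteq> restr (W j) ` (\<Union>n. Diff (W n) UNIV) \<inter> derivations (W j)"
proof
  fix E assume E: "E \<in> rel_derivations (W j) (W (Suc j))"
  obtain D where D: "D \<in> lin_maps (W (Suc j)) UNIV" and "restr (W j) D = E"
    using rel_derivation_linear_extension[OF power_tower_subfield[OF W] E]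
      power_tower_antimono[OF W, of j "Suc j"] by auto
  moreover have "D \<in> Diff (W (Suc j)) UNIV"
    using lin_maps_subset_Diff[OF prime fin gen] frob_pow_subset_power_tower[OF W, of "Suc j"] D
    unfolding frob_pow_def by blast
  ultimately show "E \<in> restr (W j) ` (\<Union>n. Diff (W n) UNIV) \<inter> derivations (W j)"
    using E unfolding rel_derivations_def by blast
qed

theorem mainTheorem6:
  fixes p :: nat and W :: "nat \<Rightarrow> 'a::field set" and k :: "'a set"
  assumes charp: "CHAR('a) = p" and ppos: "p > 0"
    and kdef: "k = (\<Inter>n. frob_pow p n)"
    and fg: "\<exists>S. finite S \<and> field_gen (k \<union> S) = (UNIV :: 'a set)"
    and tower: "power_tower p W"
  shows "(\<forall>i\<ge>1. (restr (W (i - 1)) ` (\<Union>n. Diff (W n) UNIV)) \<inter> derivations (W (i - 1))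
                 = rel_derivations (W (i - 1)) (W i))
       \<and> (\<Union>n. Diff (W n) UNIV) \<inter> derivations UNIV = rel_derivations UNIV (W 1)"
proof -
  have prime: "prime CHAR('a)" using charp ppos prime_CHAR_semidom by blast
  have W: "power_tower CHAR('a) W" using tower charp by simp
  obtain S where fin: "finite S" and gen: "field_gen (k \<union> S) = UNIV" using fg by blast
  have genW: "field_gen (W n \<union> S) = UNIV" for n
  proof -
    have "k \<subseteq> W n" using frob_pow_subset_power_tower[OF W, of n] kdef charp by auto
    then show ?thesis using field_gen_mono[of "k \<union> S" "W n \<union> S"] gen by auto
  qed
  have step: "restr (W j) ` (\<Union>n. Diff (W n) UNIV) \<inter> derivations (W j)
      = rel_derivations (W j) (W (Suc j))" for j
    using restr_Diff_derivations_subset[OF W] rel_derivations_subset_restr_Diff[OF prime W fin genW]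
    by (rule equalityI)
  have "restr UNIV D = D" for D :: "'a \<Rightarrow> 'a" unfolding restr_def by simp
  then have "(\<Union>n. Diff (W n) UNIV) \<inter> derivations UNIV = rel_derivations UNIV (W 1)"
    using step[of 0] power_tower_0[OF W] by simp
  moreover have "\<forall>i\<ge>1. restr (W (i - 1)) ` (\<Union>n. Diff (W n) UNIV) \<inter> derivations (W (i - 1))
      = rel_derivations (W (i - 1)) (W i)"
    using step by (metis Suc_diff_1 less_eq_Suc_le One_nat_def)
  ultimately show ?thesis by blast
qed

end
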